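(* There is a constant $c$ such that for every $n\in\mathbb{N}_{\geq 1}$ there exists a language $L_n\subseteq\{a,b\}^*$ with $L_n\in\mathsf{DD}_0$ such that $L_n$ is recognized by an NFA with at most $c\,n^2$ states, but every poNFA recognizing $L_n$ has more than $2^{n-1}$ states.
   Context: $\mathsf{DD}_0$ (level $0$ of the dot-depth hierarchy) is the class of finite and cofinite languages. NFAs have a single initial state and no $\varepsilon$-transitions. For an NFA with transition function $\delta$, write $p\leq q$ if $q\in\delta(p,w)$ for some word $w$; the NFA is a poNFA (partially ordered NFA) if $\leq$ is a partial order on its states. The size of an automaton is its number of states. *)

theory Defs
  imports Complex_Main
begin

datatype ab = a | b

text \<open>NFAs with a single initial state and no epsilon-transitions.
  States are drawn from nat (any finite automaton can be renamed to one with
  nat states without changing its size or language).\<close>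
record nfa =
  states :: "nat set"
  init   :: nat
  delta  :: "nat \<Rightarrow> ab \<Rightarrow> nat set"
  final  :: "nat set"

definition wf_nfa :: "nfa \<Rightarrow> bool" where
  "wf_nfa A \<longleftrightarrow> finite (states A) \<and> init A \<in> states A \<and> final A \<subseteq> states A
     \<and> (\<forall>q\<in>states A. \<forall>x. delta A q x \<subseteq> states A)"

fun delta_star :: "nfa \<Rightarrow> nat \<Rightarrow> ab list \<Rightarrow> nat set" where
  "delta_star A q [] = {q}"
| "delta_star A q (x # w) = (\<Union>p\<in>delta A q x. delta_star A p w)"

definition lang :: "nfa \<Rightarrow> ab list set" where
  "lang A = {w. delta_star A (init A) w \<inter> final A \<noteq> {}}"

definition size_nfa :: "nfa \<Rightarrow> nat" where
  "size_nfa A = card (states A)"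

definition reach :: "nfa \<Rightarrow> nat \<Rightarrow> nat \<Rightarrow> bool" where
  "reach A p q \<longleftrightarrow> (\<exists>w. q \<in> delta_star A p w)"

text \<open>poNFA: reach is a partial order on the states (reflexivity and transitivity
  hold automatically; we state all three properties as in the definition).\<close>
definition is_poNFA :: "nfa \<Rightarrow> bool" where
  "is_poNFA A \<longleftrightarrow> wf_nfa A \<and>
     (\<forall>p\<in>states A. reach A p p) \<and>
     (\<forall>p\<in>states A. \<forall>q\<in>states A. \<forall>r\<in>states A. reach A p q \<and> reach A q r \<longrightarrow> reach A p r) \<and>
     (\<forall>p\<in>states A. \<forall>q\<in>states A. reach A p q \<and> reach A q p \<longrightarrow> p = q)"

definition DD0 :: "ab list set \<Rightarrow> bool" where
  "DD0 L \<longleftrightarrow> finite L \<or> finite (- L)"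

end

(* L_n is the complement of a finite set: the correct words of an n-bit binary counter whose
   length lies in [P, 2P), where P = 3 n 2^n is the period of the counter word. Block k of the
   counter word has length 3n and spells k mod 2^n, least significant bit first, each bit
   (a = 0, b = 1) being followed by the separator ab. A word is correct iff it is a prefix of the
   counter word: the separators are right, the first block is zero and every block is the
   increment of the previous one.

   An NFA with O(n) states accepts every incorrect word by guessing an error: a wrong separator,
   a 1 in the first block, or a bit that disagrees with the incremented bit 3n letters earlier,
   whose carry a deterministic scanner tracks. The scanner also counts the completed all-ones
   blocks (up to 2) and accepts a correct word unless that count is 1.

   In a poNFA a state that a run visits twice is kept in between, so it has a self-loop on every
   letter read in between. A run on the correct word of length P - 1 through fewer than n 2^n
   states repeats a state across a window of at least 3 letters, which contains both letters;
   so the poNFA also accepts the word with one period inserted there, the correct word of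
   length 2P - 1, which is not in L_n. *)

theory Submission
  imports Defs "HOL-Library.Countable"
begin

section \<open>Pumping in partially ordered NFAs\<close>

lemma delta_star_append:
  "delta_star A q (u @ v) = (\<Union>p\<in>delta_star A q u. delta_star A p v)"
  by (induction u arbitrary: q) auto

lemma delta_star_self_loops:
  assumes "\<And>x. x \<in> set w \<Longrightarrow> q \<in> delta A q x"
  shows "q \<in> delta_star A q w"
  using assms by (induction w) auto

lemma delta_star_run:
  "q \<in> delta_star A p w \<Longrightarrow> \<exists>\<rho>. \<rho> 0 = p \<and> \<rho> (length w) = q \<and>
     (\<forall>i < length w. \<rho> (Suc i) \<in> delta A (\<rho> i) (w ! i))"
proof (induction w arbitrary: p)
  case (Cons x w)
  then obtain p' where "p' \<in> delta A p x" "q \<in> delta_star A p' w" by auto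
  moreover from Cons.IH[OF this(2)] obtain \<rho> where "\<rho> 0 = p'" "\<rho> (length w) = q"
    "\<forall>i < length w. \<rho> (Suc i) \<in> delta A (\<rho> i) (w ! i)" by blast
  ultimately have "\<forall>i < length (x # w). case_nat p \<rho> (Suc i) \<in> delta A (case_nat p \<rho> i) ((x # w) ! i)"
    by (auto simp: less_Suc_eq_0_disj)
  with \<open>\<rho> (length w) = q\<close> show ?case by (intro exI[of _ "case_nat p \<rho>"]) simp
qed (auto intro: exI[of _ "\<lambda>_. p"])

lemma run_slice_delta_star:
  assumes run: "\<And>i. i < length w \<Longrightarrow> \<rho> (Suc i) \<in> delta A (\<rho> i) (w ! i)"
    and "i \<le> j" "j \<le> length w"
  shows "\<rho> j \<in> delta_star A (\<rho> i) (drop i (take j w))"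
  using assms(2,3)
proof (induction j rule: dec_induct)
  case (step j)
  then have "drop i (take (Suc j) w) = drop i (take j w) @ [w ! j]"
    by (simp add: take_Suc_conv_app_nth)
  with step run[of j] show ?case by (auto simp: delta_star_append)
qed simp

lemma run_in_states:
  assumes "wf_nfa A" "\<rho> 0 \<in> states A"
    and "\<And>i. i < length w \<Longrightarrow> \<rho> (Suc i) \<in> delta A (\<rho> i) (w ! i)" "i \<le> length w"
  shows "\<rho> i \<in> states A"
  using assms(4)
proof (induction i)
  case (Suc i)
  then have "\<rho> (Suc i) \<in> delta A (\<rho> i) (w ! i)" "\<rho> i \<in> states A"
    using assms(3) by auto
  with assms(1) show ?case by (auto simp: wf_nfa_def)
qed (use assms(2) in simp)

lemma pigeonhole_mod:
  assumes "f ` {0..n} \<subseteq> S" "finite S" "0 < m" "m * card S \<le> n"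
  shows "\<exists>i j. i + m \<le> j \<and> j \<le> n \<and> f i = f j"
proof -
  let ?g = "\<lambda>i. (f i, i mod m)"
  have "card (?g ` {0..n}) \<le> card (S \<times> {..<m})"
    using assms(1-3) by (intro card_mono) auto
  also have "\<dots> < card {0..n}"
    using assms(4) by (simp add: card_cartesian_product mult.commute)
  finally obtain i j where ij: "i \<in> {0..n}" "j \<in> {0..n}" "i \<noteq> j" "?g i = ?g j"
    using pigeonhole unfolding inj_on_def by blast
  show ?thesis
  proof (cases "i < j")
    case True
    with ij have "m dvd j - i" by (simp add: mod_eq_dvd_iff_nat[symmetric])
    with True ij show ?thesis by (intro exI[of _ i] exI[of _ j]) (auto dest: dvd_imp_le)
  next
    case False
    with ij have "m dvd i - j" by (simp add: mod_eq_dvd_iff_nat[symmetric])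
    with False ij show ?thesis by (intro exI[of _ j] exI[of _ i]) (auto dest: dvd_imp_le)
  qed
qed

lemma accepting_run:
  assumes "wf_nfa A" "u \<in> lang A"
  obtains \<rho> where "\<rho> 0 = init A" "\<rho> (length u) \<in> final A"
    "\<And>i. i < length u \<Longrightarrow> \<rho> (Suc i) \<in> delta A (\<rho> i) (u ! i)"
    "\<And>i. i \<le> length u \<Longrightarrow> \<rho> i \<in> states A"
proof -
  obtain f where "f \<in> final A" "f \<in> delta_star A (init A) u"
    using assms(2) by (auto simp: lang_def)
  moreover obtain \<rho> where "\<rho> 0 = init A" "\<rho> (length u) = f"
    "\<forall>i < length u. \<rho> (Suc i) \<in> delta A (\<rho> i) (u ! i)"
    using delta_star_run[OF \<open>f \<in> delta_star A (init A) u\<close>] by blast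
  moreover have "init A \<in> states A"
    using assms(1) by (simp add: wf_nfa_def)
  ultimately show ?thesis
    using that run_in_states[OF assms(1), of \<rho> u] by auto
qed

lemma poNFA_run_stationary:
  assumes A: "is_poNFA A"
    and run: "\<And>i. i < length w \<Longrightarrow> \<rho> (Suc i) \<in> delta A (\<rho> i) (w ! i)"
    and in_states: "\<And>i. i \<le> length w \<Longrightarrow> \<rho> i \<in> states A"
    and "\<rho> k = \<rho> l" "k \<le> j" "j \<le> l" "l \<le> length w"
  shows "\<rho> j = \<rho> k"
proof -
  have "reach A (\<rho> k) (\<rho> j)" "reach A (\<rho> j) (\<rho> k)"
    using run_slice_delta_star[OF run, of k j] run_slice_delta_star[OF run, of j l] assms(4-)
    by (auto simp: reach_def)
  with A in_states[of j] in_states[of k] assms(4-) show ?thesis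
    unfolding is_poNFA_def by (metis le_trans)
qed

lemma poNFA_pumping:
  assumes A: "is_poNFA A" and u: "u \<in> lang A" and m: "0 < m" "m * size_nfa A \<le> length u"
  obtains k l where "k + m \<le> l" "l \<le> length u"
    "\<And>z. set z \<subseteq> set (drop k (take l u)) \<Longrightarrow> take k u @ z @ drop l u \<in> lang A"
proof -
  have wf: "wf_nfa A" using A by (simp add: is_poNFA_def)
  obtain \<rho> where \<rho>: "\<rho> 0 = init A" "\<rho> (length u) \<in> final A"
    and run: "\<And>i. i < length u \<Longrightarrow> \<rho> (Suc i) \<in> delta A (\<rho> i) (u ! i)"
    and in_states: "\<And>i. i \<le> length u \<Longrightarrow> \<rho> i \<in> states A"
    using accepting_run[OF wf u] by blast
  then have "\<rho> ` {0..length u} \<subseteq> states A"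
    by auto
  then obtain k l where kl: "k + m \<le> l" "l \<le> length u" "\<rho> k = \<rho> l"
    using pigeonhole_mod[of \<rho> "length u" "states A" m] wf m
    by (auto simp: wf_nfa_def size_nfa_def)
  define q where "q = \<rho> k"
  have stationary: "\<rho> j = q" if "k \<le> j" "j \<le> l" for j
    using poNFA_run_stationary[OF A run in_states kl(3) that kl(2)] by (simp add: q_def)
  have loop: "q \<in> delta A q x" if x: "x \<in> set (drop k (take l u))" for x
  proof -
    obtain i where "i < length (drop k (take l u))" "x = drop k (take l u) ! i"
      using x by (auto simp: in_set_conv_nth)
    then have "k \<le> k + i" "k + i < l" "x = u ! (k + i)"
      using kl(2) by auto
    with run[of "k + i"] stationary[of "k + i"] stationary[of "Suc (k + i)"] kl(2) show ?thesis
      by simp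
  qed
  have "take k u @ z @ drop l u \<in> lang A" if "set z \<subseteq> set (drop k (take l u))" for z
  proof -
    have "q \<in> delta_star A (init A) (take k u)"
      using run_slice_delta_star[OF run, of 0 k] kl \<rho>(1) by (simp add: q_def)
    moreover have "q \<in> delta_star A q z"
      using that loop by (intro delta_star_self_loops) auto
    moreover have "\<rho> (length u) \<in> delta_star A q (drop l u)"
      using run_slice_delta_star[OF run, of l "length u"] kl stationary[of l] by simp
    ultimately show ?thesis
      using \<rho>(2) by (auto simp: lang_def delta_star_append)
  qed
  with kl that show ?thesis
    by blast
qed

fun steps :: "('s \<Rightarrow> ab \<Rightarrow> 's set) \<Rightarrow> 's \<Rightarrow> ab list \<Rightarrow> 's set" where
  "steps \<delta> s [] = {s}"
| "steps \<delta> s (x # w) = (\<Union>t\<in>\<delta> s x. steps \<delta> t w)"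

lemma steps_snoc: "steps \<delta> s (w @ [x]) = (\<Union>t\<in>steps \<delta> s w. \<delta> t x)"
  by (induction w arbitrary: s) auto

definition nfa_of :: "'s::countable set \<Rightarrow> 's \<Rightarrow> ('s \<Rightarrow> ab \<Rightarrow> 's set) \<Rightarrow> 's set \<Rightarrow> nfa" where
  "nfa_of Q s\<^sub>0 \<delta> F = \<lparr>states = to_nat ` Q, init = to_nat s\<^sub>0,
     delta = (\<lambda>q x. to_nat ` \<delta> (from_nat q) x), final = to_nat ` F\<rparr>"

lemma wf_nfa_of:
  assumes "finite Q" "s\<^sub>0 \<in> Q" "F \<subseteq> Q" "\<And>s x. s \<in> Q \<Longrightarrow> \<delta> s x \<subseteq> Q"
  shows "wf_nfa (nfa_of Q s\<^sub>0 \<delta> F)"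
  using assms by (fastforce simp: wf_nfa_def nfa_of_def)

lemma size_nfa_of: "size_nfa (nfa_of Q s\<^sub>0 \<delta> F) = card Q"
  by (simp add: size_nfa_def nfa_of_def card_image inj_on_def)

lemma delta_star_nfa_of: "delta_star (nfa_of Q s\<^sub>0 \<delta> F) (to_nat s) w = to_nat ` steps \<delta> s w"
  by (induction w arbitrary: s) (auto simp: nfa_of_def)

lemma lang_nfa_of: "lang (nfa_of Q s\<^sub>0 \<delta> F) = {w. steps \<delta> s\<^sub>0 w \<inter> F \<noteq> {}}"
proof -
  have "delta_star (nfa_of Q s\<^sub>0 \<delta> F) (init (nfa_of Q s\<^sub>0 \<delta> F)) w \<inter> final (nfa_of Q s\<^sub>0 \<delta> F)
      = to_nat ` (steps \<delta> s\<^sub>0 w \<inter> F)" for w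
    using delta_star_nfa_of[of Q s\<^sub>0 \<delta> F s\<^sub>0 w] by (simp add: nfa_of_def image_Int inj_on_def)
  then show ?thesis
    by (simp add: lang_def)
qed

section \<open>Binary counter words\<close>

lemma bit_add_one_nat: "bit (k + 1 :: nat) j \<longleftrightarrow> bit k j \<noteq> (\<forall>i<j. bit k i)"
proof (induction j arbitrary: k)
  case 0
  then show ?case by (simp add: bit_0)
next
  case (Suc j)
  show ?case
  proof (cases "even k")
    case True
    then show ?thesis by (auto simp: bit_Suc bit_0 intro: exI[of _ 0])
  next
    case False
    then have "(k + 1) div 2 = k div 2 + 1" by presburger
    with False Suc.IH[of "k div 2"] show ?thesis
      by (simp add: bit_Suc bit_0 All_less_Suc2)
  qed
qed

lemma all_bits_iff_dvd_nat: "(\<forall>i<n. bit (k :: nat) i) \<longleftrightarrow> 2 ^ n dvd k + 1"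
proof (induction n arbitrary: k)
  case (Suc n)
  show ?case
  proof (cases "even k")
    case False
    then have "k + 1 = 2 * (k div 2 + 1)" by presburger
    then have "2 ^ Suc n dvd k + 1 \<longleftrightarrow> 2 ^ n dvd k div 2 + 1"
      by (metis power_Suc nat_mult_dvd_cancel_disj zero_neq_numeral)
    with False Suc.IH[of "k div 2"] show ?thesis
      by (simp add: All_less_Suc2 bit_Suc bit_0)
  qed (auto simp: All_less_Suc2 bit_0 dest: dvd_mult_left)
qed simp

definition counter_letter :: "nat \<Rightarrow> nat \<Rightarrow> ab" where
  "counter_letter N q =
     (if q mod 3 = 1 then a else if q mod 3 = 2 then b
      else if bit (q div (3 * N)) (q mod (3 * N) div 3) then b else a)"

lemma counter_letter_mod_3 [simp]:
  "q mod 3 = 1 \<Longrightarrow> counter_letter N q = a"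
  "q mod 3 = 2 \<Longrightarrow> counter_letter N q = b"
  by (simp_all add: counter_letter_def)

lemma counter_letter_bit:
  assumes "j < N"
  shows "counter_letter N (k * (3 * N) + 3 * j) = (if bit k j then b else a)"
  using assms by (simp add: counter_letter_def)

lemma counter_letter_periodic:
  assumes "0 < N"
  shows "counter_letter N (q + 3 * N * 2 ^ N) = counter_letter N q"
proof -
  have "bit (2 ^ N + k) j = bit k j" if "j < N" for k j :: nat
    using that bit_take_bit_iff[of N "2 ^ N + k" j] bit_take_bit_iff[of N k j]
    by (simp add: take_bit_eq_mod)
  moreover have "q mod (3 * N) div 3 < N"
    using assms by (intro less_mult_imp_div_less) (simp add: mult.commute)
  moreover have "(q + 3 * N * 2 ^ N) div (3 * N) = q div (3 * N) + 2 ^ N"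
    using assms by simp
  moreover have "(q + 3 * N * 2 ^ N) mod (3 * N) = q mod (3 * N)"
    by simp
  moreover have "(q + 3 * N * 2 ^ N) mod 3 = q mod 3"
    by (simp add: mult.assoc)
  ultimately show ?thesis
    by (simp add: counter_letter_def)
qed

definition counter_prefix :: "nat \<Rightarrow> nat \<Rightarrow> ab list" where
  "counter_prefix N L = map (counter_letter N) [0..<L]"

lemma length_counter_prefix [simp]: "length (counter_prefix N L) = L"
  by (simp add: counter_prefix_def)

lemma counter_prefix_Suc: "counter_prefix N (Suc L) = counter_prefix N L @ [counter_letter N L]"
  by (simp add: counter_prefix_def)

lemma counter_prefix_pump:
  assumes "0 < N" "k \<le> l" "l \<le> L"
  shows "take k (counter_prefix N L) @ map (counter_letter N) [k..<l + 3 * N * 2 ^ N]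
      @ drop l (counter_prefix N L) = counter_prefix N (L + 3 * N * 2 ^ N)"
proof -
  let ?P = "3 * N * 2 ^ N"
  have drop: "drop l (counter_prefix N L) = map (counter_letter N) [l + ?P..<L + ?P]"
  proof (rule nth_equalityI)
    fix i assume "i < length (drop l (counter_prefix N L))"
    then show "drop l (counter_prefix N L) ! i = map (counter_letter N) [l + ?P..<L + ?P] ! i"
      using counter_letter_periodic[OF assms(1), of "l + i"] by (simp add: counter_prefix_def ac_simps)
  qed simp
  have split: "[i..<m] = [i..<j] @ [j..<m]" if "i \<le> j" "j \<le> m" for i j m
    using upt_add_eq_append[OF that(1), of "m - j"] that(2) by simp
  have "[0..<L + ?P] = [0..<k] @ [k..<L + ?P]"
    using assms(2,3) by (intro split) simp_all
  also have "[k..<L + ?P] = [k..<l + ?P] @ [l + ?P..<L + ?P]"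
    using assms(2,3) by (intro split) simp_all
  finally show ?thesis
    using assms(2,3) drop by (simp add: counter_prefix_def take_map)
qed

lemma set_counter_prefix_window:
  assumes "k + 3 \<le> l" "l \<le> L"
  shows "set (drop k (take l (counter_prefix N L))) = UNIV"
proof -
  have window: "\<exists>j. k \<le> j \<and> j < l \<and> j mod 3 = r" if "r < 3" for r
    using assms(1) that by presburger
  obtain ja jb where ja: "k \<le> ja" "ja < l" "ja mod 3 = 1" and jb: "k \<le> jb" "jb < l" "jb mod 3 = 2"
    using window[of 1] window[of 2] by auto
  have "a \<in> counter_letter N ` {k..<l}"
    using ja by (intro rev_image_eqI[of ja]) simp_all
  moreover have "b \<in> counter_letter N ` {k..<l}"
    using jb by (intro rev_image_eqI[of jb]) simp_all
  moreover have "set (drop k (take l (counter_prefix N L))) = counter_letter N ` {k..<l}"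
    using assms(2) by (simp add: counter_prefix_def take_map drop_map)
  ultimately show ?thesis
    by (metis UNIV_eq_I ab.exhaust)
qed

text \<open>All bits of the block of \<open>p\<close> before \<open>p\<close> are 1, so that incrementing the block carries
  into \<open>p\<close>.\<close>

definition carry :: "nat \<Rightarrow> (nat \<Rightarrow> ab) \<Rightarrow> nat \<Rightarrow> bool" where
  "carry N f p \<longleftrightarrow> (\<forall>j. 3 * j < p mod (3 * N) \<longrightarrow> f (p - p mod (3 * N) + 3 * j) = b)"

lemma carry_cong:
  assumes "\<And>i. i < p \<Longrightarrow> f i = g i"
  shows "carry N f p = carry N g p"
proof -
  have "p - p mod (3 * N) + 3 * j < p" if "3 * j < p mod (3 * N)" for j
    using that mod_less_eq_dividend[of p "3 * N"] by linarith
  with assms show ?thesis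
    unfolding carry_def by auto
qed

lemma carry_snoc: "carry N ((!) (w @ [x])) (length w) = carry N ((!) w) (length w)"
  by (rule carry_cong) (simp add: nth_append)

lemma carry_Suc:
  "carry N f (Suc p) \<longleftrightarrow>
    (if Suc (p mod (3 * N)) = 3 * N then True else carry N f p \<and> (p mod 3 = 0 \<longrightarrow> f p = b))"
proof (cases "Suc (p mod (3 * N)) = 3 * N")
  case True
  then have "Suc p mod (3 * N) = 0"
    by (simp add: mod_Suc)
  with True show ?thesis
    by (simp add: carry_def)
next
  case False
  define r where "r = p mod (3 * N)"
  have "Suc p mod (3 * N) = Suc r" "Suc p - Suc r = p - r" "r \<le> p"
    using False by (simp_all add: mod_Suc r_def)
  moreover have "r mod 3 = p mod 3"
    by (simp add: r_def mod_mod_cancel)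
  moreover have "(\<forall>j. 3 * j < Suc r \<longrightarrow> f (p - r + 3 * j) = b) \<longleftrightarrow>
      (\<forall>j. 3 * j < r \<longrightarrow> f (p - r + 3 * j) = b) \<and> (\<forall>j. 3 * j = r \<longrightarrow> f (p - r + 3 * j) = b)"
    by (auto simp: less_Suc_eq)
  moreover have "(\<forall>j. 3 * j = r \<longrightarrow> f (p - r + 3 * j) = b) \<longleftrightarrow> (r mod 3 = 0 \<longrightarrow> f p = b)"
    using \<open>r \<le> p\<close> by auto
  ultimately show ?thesis
    using False by (simp add: carry_def r_def)
qed

lemma carry_counter_letter:
  assumes "r < 3 * N"
  shows "carry N (counter_letter N) (k * (3 * N) + r) \<longleftrightarrow> (\<forall>j. 3 * j < r \<longrightarrow> bit k j)"
proof -
  have "counter_letter N (k * (3 * N) + 3 * j) = b \<longleftrightarrow> bit k j" if "3 * j < r" for j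
    using that assms counter_letter_bit[of j N k] by simp
  with assms show ?thesis
    by (simp add: carry_def)
qed

lemma counter_letter_next_block:
  assumes "0 < N" "p mod 3 = 0"
  shows "counter_letter N (p + 3 * N) = b \<longleftrightarrow>
    (counter_letter N p = b) \<noteq> carry N (counter_letter N) p"
proof -
  define k where "k = p div (3 * N)"
  obtain j where j: "p mod (3 * N) = 3 * j"
    using assms(2) by (metis dvd_def mod_mod_cancel dvd_triv_left mod_0_imp_dvd)
  have "p mod (3 * N) < 3 * N"
    using assms(1) by simp
  with j have "j < N" by simp
  have p: "p = k * (3 * N) + 3 * j"
    using div_mult_mod_eq[of p "3 * N"] j by (simp add: k_def)
  have "p + 3 * N = (k + 1) * (3 * N) + 3 * j"
    using p by simp
  then have "counter_letter N (p + 3 * N) = (if bit (k + 1) j then b else a)"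
    by (simp only: counter_letter_bit[OF \<open>j < N\<close>])
  moreover have "counter_letter N p = (if bit k j then b else a)"
    using p by (simp only: counter_letter_bit[OF \<open>j < N\<close>])
  moreover have "carry N (counter_letter N) p \<longleftrightarrow> (\<forall>i<j. bit k i)"
    using p carry_counter_letter[of "3 * j" N k] \<open>j < N\<close> by simp
  ultimately show ?thesis
    using bit_add_one_nat[of k j] by simp
qed

lemma carry_counter_letter_at_block_end:
  assumes "0 < N"
  shows "Suc (L mod (3 * N)) = 3 * N \<and> carry N (counter_letter N) L \<longleftrightarrow> 3 * N * 2 ^ N dvd Suc L"
proof (cases "Suc (L mod (3 * N)) = 3 * N")
  case True
  define k where "k = L div (3 * N)"
  have L: "L = k * (3 * N) + (3 * N - 1)"
    using True div_mult_mod_eq[of L "3 * N"] by (simp add: k_def)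
  have "carry N (counter_letter N) L \<longleftrightarrow> (\<forall>j. 3 * j < 3 * N - 1 \<longrightarrow> bit k j)"
    using carry_counter_letter[of "3 * N - 1" N k] assms L by simp
  also have "\<dots> \<longleftrightarrow> (\<forall>j<N. bit k j)"
    by (intro all_cong1 imp_cong) linarith+
  also have "\<dots> \<longleftrightarrow> 2 ^ N dvd k + 1"
    by (rule all_bits_iff_dvd_nat)
  also have "\<dots> \<longleftrightarrow> 3 * N * 2 ^ N dvd 3 * N * (k + 1)"
    by (rule nat_mult_dvd_cancel1[symmetric]) (use assms in simp)
  also have "3 * N * (k + 1) = Suc L"
    using L assms by simp
  finally show ?thesis
    using True by simp
next
  case False
  then have "\<not> 3 * N dvd Suc L"
    by (simp add: dvd_eq_mod_eq_0 mod_Suc)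
  then have "\<not> 3 * N * 2 ^ N dvd Suc L"
    using dvd_mult_left by blast
  with False show ?thesis
    by simp
qed

definition local_error :: "nat \<Rightarrow> nat \<Rightarrow> ab \<Rightarrow> bool" where
  "local_error N q x \<longleftrightarrow>
     (q mod 3 = 1 \<and> x = b) \<or> (q mod 3 = 2 \<and> x = a) \<or> (q mod 3 = 0 \<and> q < 3 * N \<and> x = b)"

text \<open>The bit that the increment of the block of \<open>p\<close> must have at \<open>p + 3 * N\<close>.\<close>

definition next_bit :: "nat \<Rightarrow> (nat \<Rightarrow> ab) \<Rightarrow> nat \<Rightarrow> bool" where
  "next_bit N f p \<longleftrightarrow> (f p = b) \<noteq> carry N f p"

definition bad_letter :: "nat \<Rightarrow> ab list \<Rightarrow> ab \<Rightarrow> bool" where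
  "bad_letter N v x \<longleftrightarrow> local_error N (length v) x \<or>
     (3 * N \<le> length v \<and> length v mod 3 = 0 \<and>
      (x = b) \<noteq> next_bit N ((!) v) (length v - 3 * N))"

definition has_error :: "nat \<Rightarrow> ab list \<Rightarrow> bool" where
  "has_error N w \<longleftrightarrow> (\<exists>q < length w. bad_letter N (take q w) (w ! q))"

lemma next_bit_cong:
  assumes "\<And>i. i \<le> p \<Longrightarrow> f i = g i"
  shows "next_bit N f p = next_bit N g p"
  using assms carry_cong[of p f g N] by (simp add: next_bit_def)

lemma next_bit_snoc: "p < length v \<Longrightarrow> next_bit N ((!) (v @ [x])) p = next_bit N ((!) v) p"
  by (rule next_bit_cong) (simp add: nth_append)

lemma has_error_snoc: "has_error N (v @ [x]) \<longleftrightarrow> has_error N v \<or> bad_letter N v x"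
proof -
  have "bad_letter N (take q (v @ [x])) ((v @ [x]) ! q) = bad_letter N (take q v) (v ! q)"
    if "q < length v" for q
    using that by (simp add: nth_append)
  then show ?thesis
    unfolding has_error_def by (auto simp: Ex_less_Suc)
qed

lemma bad_letter_counter_prefix:
  assumes "0 < N"
  shows "bad_letter N (counter_prefix N L) x \<longleftrightarrow> x \<noteq> counter_letter N L"
proof -
  have next_bit_eq: "next_bit N ((!) (counter_prefix N L)) p = next_bit N (counter_letter N) p"
    if "p < L" for p
    using that by (intro next_bit_cong) (simp add: counter_prefix_def)
  have "L mod 3 = 0 \<or> L mod 3 = 1 \<or> L mod 3 = 2"
    by presburger
  then consider "L mod 3 = 1" | "L mod 3 = 2" | "L mod 3 = 0" "L < 3 * N" | "L mod 3 = 0" "3 * N \<le> L"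
    by (cases "L < 3 * N") auto
  then show ?thesis
  proof cases
    case 3
    then have "L = 0 * (3 * N) + 3 * (L div 3)" "L div 3 < N"
      by presburger+
    then have "counter_letter N L = a"
      using counter_letter_bit[of "L div 3" N 0] by simp
    with 3 show ?thesis
      by (cases x) (simp_all add: bad_letter_def local_error_def)
  next
    case 4
    define p where "p = L - 3 * N"
    have "p + 3 * N = L" "p < L"
      using 4 assms by (simp_all add: p_def)
    moreover from this have "p mod 3 = 0"
      using 4 by (metis mod_mult_self2)
    ultimately have "next_bit N ((!) (counter_prefix N L)) p \<longleftrightarrow> counter_letter N L = b"
      using next_bit_eq counter_letter_next_block[OF assms, of p] by (simp add: next_bit_def)
    with 4 show ?thesis
      by (cases x; cases "counter_letter N L") (simp_all add: bad_letter_def local_error_def flip: p_def)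
  qed (cases x; simp add: bad_letter_def local_error_def)+
qed

lemma no_error_iff_counter_prefix:
  assumes "0 < N"
  shows "\<not> has_error N w \<longleftrightarrow> w = counter_prefix N (length w)"
proof (induction w rule: rev_induct)
  case (snoc x w)
  have "\<not> has_error N (w @ [x]) \<longleftrightarrow> w = counter_prefix N (length w) \<and> \<not> bad_letter N w x"
    using snoc.IH by (simp add: has_error_snoc)
  also have "\<dots> \<longleftrightarrow> w = counter_prefix N (length w) \<and> x = counter_letter N (length w)"
    using bad_letter_counter_prefix[OF assms] by metis
  also have "\<dots> \<longleftrightarrow> w @ [x] = counter_prefix N (length (w @ [x]))"
    by (simp add: counter_prefix_Suc)
  finally show ?case .
qed (simp add: has_error_def counter_prefix_def)

section \<open>The counter automaton\<close>

text \<open>\<open>Scan r g z c\<close> is the scanner after a prefix: \<open>r\<close> is its length modulo \<open>3 * N\<close>, \<open>g\<close>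
  the carry into the next position, \<open>z\<close> whether it lies in the first block, and \<open>c\<close> the number of
  completed all-ones blocks (up to 2). \<open>Wait d e\<close> has guessed an error \<open>d\<close> letters ahead, where
  the bit \<open>e\<close> is expected.\<close>

datatype cstate = Scan nat bool bool nat | Wait nat bool | Accept

instance cstate :: countable
  by countable_datatype

definition scan_step :: "nat \<Rightarrow> cstate \<Rightarrow> ab \<Rightarrow> cstate" where
  "scan_step N s x = (case s of
     Scan r g z c \<Rightarrow>
       if Suc r = 3 * N then Scan 0 True False (if g then min 2 (Suc c) else c)
       else Scan (Suc r) (g \<and> (r mod 3 = 0 \<longrightarrow> x = b)) z c
   | _ \<Rightarrow> s)"

definition scan :: "nat \<Rightarrow> ab list \<Rightarrow> cstate" where
  "scan N w = foldl (scan_step N) (Scan 0 True True 0) w"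

definition transitions :: "nat \<Rightarrow> cstate \<Rightarrow> ab \<Rightarrow> cstate set" where
  "transitions N s x = (case s of
     Scan r g z c \<Rightarrow> {scan_step N s x}
       \<union> (if r mod 3 = 0 then {Wait (3 * N - 1) ((x = b) \<noteq> g)} else {})
       \<union> (if (r mod 3 = 1 \<and> x = b) \<or> (r mod 3 = 2 \<and> x = a) \<or> (r mod 3 = 0 \<and> z \<and> x = b)
          then {Accept} else {})
   | Wait d e \<Rightarrow> if d = 0 then (if (x = b) \<noteq> e then {Accept} else {}) else {Wait (d - 1) e}
   | Accept \<Rightarrow> {Accept})"

definition counter_states :: "nat \<Rightarrow> cstate set" where
  "counter_states N = {s. case s of
     Scan r g z c \<Rightarrow> r < 3 * N \<and> c < 3 | Wait d e \<Rightarrow> d < 3 * N | Accept \<Rightarrow> True}"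

definition accepting_states :: "nat \<Rightarrow> cstate set" where
  "accepting_states N = {s. case s of
     Scan r g z c \<Rightarrow> r < 3 * N \<and> (c = 0 \<or> c = 2) | Wait d e \<Rightarrow> False | Accept \<Rightarrow> True}"

definition counter_nfa :: "nat \<Rightarrow> nfa" where
  "counter_nfa N =
     nfa_of (counter_states N) (Scan 0 True True 0) (transitions N) (accepting_states N)"

lemma counter_states_subset:
  "counter_states N \<subseteq>
     (\<lambda>(r, g, z, c). Scan r g z c) ` ({..<3 * N} \<times> UNIV \<times> UNIV \<times> {..<3})
     \<union> (\<lambda>(d, e). Wait d e) ` ({..<3 * N} \<times> UNIV) \<union> {Accept}"
proof
  fix s assume s: "s \<in> counter_states N"
  show "s \<in> (\<lambda>(r, g, z, c). Scan r g z c) ` ({..<3 * N} \<times> UNIV \<times> UNIV \<times> {..<3})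
     \<union> (\<lambda>(d, e). Wait d e) ` ({..<3 * N} \<times> UNIV) \<union> {Accept}"
  proof (cases s)
    case (Scan r g z c)
    with s have "s \<in> (\<lambda>(r, g, z, c). Scan r g z c) ` ({..<3 * N} \<times> UNIV \<times> UNIV \<times> {..<3})"
      by (intro rev_image_eqI[of "(r, g, z, c)"]) (auto simp: counter_states_def)
    then show ?thesis by blast
  next
    case (Wait d e)
    with s have "s \<in> (\<lambda>(d, e). Wait d e) ` ({..<3 * N} \<times> UNIV)"
      by (intro rev_image_eqI[of "(d, e)"]) (auto simp: counter_states_def)
    then show ?thesis by blast
  qed simp
qed

lemma finite_counter_states: "finite (counter_states N)"
  by (rule finite_subset[OF counter_states_subset]) auto

lemma card_counter_states: "card (counter_states N) \<le> 42 * N + 1"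
proof -
  let ?S = "{..<3 * N} \<times> (UNIV :: bool set) \<times> (UNIV :: bool set) \<times> {..<3 :: nat}"
  let ?W = "{..<3 * N} \<times> (UNIV :: bool set)"
  have "card (counter_states N) \<le>
      card ((\<lambda>(r, g, z, c). Scan r g z c) ` ?S \<union> (\<lambda>(d, e). Wait d e) ` ?W \<union> {Accept})"
    by (intro card_mono counter_states_subset) auto
  also have "\<dots> \<le> card ?S + card ?W + 1"
    by (intro card_Un_le[THEN order_trans] add_le_mono card_image_le) auto
  also have "\<dots> = 42 * N + 1"
    by (simp add: card_cartesian_product)
  finally show ?thesis .
qed

lemma wf_counter_nfa:
  assumes "0 < N"
  shows "wf_nfa (counter_nfa N)"
  unfolding counter_nfa_def
proof (rule wf_nfa_of)
  show "Scan 0 True True 0 \<in> counter_states N" "accepting_states N \<subseteq> counter_states N"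
    using assms by (auto simp: counter_states_def accepting_states_def split: cstate.splits)
  show "transitions N s x \<subseteq> counter_states N" if "s \<in> counter_states N" for s x
    using that assms
    by (auto simp: counter_states_def transitions_def scan_step_def split: cstate.splits)
qed (rule finite_counter_states)

lemma size_counter_nfa: "size_nfa (counter_nfa N) \<le> 42 * N + 1"
  using card_counter_states by (simp add: counter_nfa_def size_nfa_of)

lemma scan_snoc: "scan N (w @ [x]) = scan_step N (scan N w) x"
  by (simp add: scan_def)

lemma scan_eq_Scan:
  assumes "0 < N"
  shows "\<exists>c. scan N w = Scan (length w mod (3 * N)) (carry N ((!) w) (length w)) (length w < 3 * N) c"
proof (induction w rule: rev_induct)
  case Nil
  show ?case
    using assms by (simp add: scan_def carry_def)
next
  case (snoc x w)
  define L where "L = length w"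
  then obtain c where c: "scan N w = Scan (L mod (3 * N)) (carry N ((!) w) L) (L < 3 * N) c"
    using snoc.IH by blast
  have carry: "carry N ((!) (w @ [x])) (Suc L) \<longleftrightarrow>
      (if Suc (L mod (3 * N)) = 3 * N then True else carry N ((!) w) L \<and> (L mod 3 = 0 \<longrightarrow> x = b))"
    using carry_Suc[of N "(!) (w @ [x])" L] carry_snoc[of N w x] by (simp add: L_def)
  have "L mod (3 * N) mod 3 = L mod 3"
    by (simp add: mod_mod_cancel)
  moreover have "Suc L mod (3 * N) = (if Suc (L mod (3 * N)) = 3 * N then 0 else Suc (L mod (3 * N)))"
    by (simp add: mod_Suc)
  moreover have "Suc L < 3 * N \<longleftrightarrow> L < 3 * N \<and> Suc (L mod (3 * N)) \<noteq> 3 * N"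
    by (cases "L < 3 * N") auto
  ultimately show ?case
    unfolding scan_snoc c using carry by (simp add: scan_step_def L_def)
qed

lemma scan_counter_prefix_count:
  assumes "0 < N"
  shows "\<exists>r g z. scan N (counter_prefix N L) = Scan r g z (min 2 (L div (3 * N * 2 ^ N)))"
proof (induction L)
  case 0
  show ?case
    by (auto simp: scan_def counter_prefix_def)
next
  case (Suc L)
  let ?P = "3 * N * 2 ^ N"
  have "carry N ((!) (counter_prefix N L)) L = carry N (counter_letter N) L"
    by (rule carry_cong) (simp add: counter_prefix_def)
  with scan_eq_Scan[OF assms, of "counter_prefix N L"] Suc.IH
  have "scan N (counter_prefix N L) =
      Scan (L mod (3 * N)) (carry N (counter_letter N) L) (L < 3 * N) (min 2 (L div ?P))"
    by auto
  moreover have "Suc L div ?P = (if ?P dvd Suc L then Suc (L div ?P) else L div ?P)"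
    by (simp add: div_Suc dvd_eq_mod_eq_0)
  ultimately show ?case
    using carry_counter_letter_at_block_end[OF assms, of L]
    by (auto simp: counter_prefix_Suc scan_snoc scan_step_def)
qed

definition waiting :: "nat \<Rightarrow> ab list \<Rightarrow> cstate set" where
  "waiting N w = (\<lambda>p. Wait (p + 3 * N - length w) (next_bit N ((!) w) p)) `
     {p. p < length w \<and> p mod 3 = 0 \<and> length w \<le> p + 3 * N}"

lemma transitions_scan:
  assumes "0 < N"
  shows "transitions N (scan N w) x = {scan N (w @ [x])}
    \<union> (if length w mod 3 = 0 then {Wait (3 * N - 1) (next_bit N ((!) (w @ [x])) (length w))} else {})
    \<union> (if local_error N (length w) x then {Accept} else {})"
proof -
  obtain c where c: "scan N w =
      Scan (length w mod (3 * N)) (carry N ((!) w) (length w)) (length w < 3 * N) c"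
    using scan_eq_Scan[OF assms] by blast
  have next_bit: "next_bit N ((!) (w @ [x])) (length w) \<longleftrightarrow> (x = b) \<noteq> carry N ((!) w) (length w)"
    using carry_snoc[of N w x] by (simp add: next_bit_def)
  have "length w mod (3 * N) mod 3 = length w mod 3"
    by (simp add: mod_mod_cancel)
  then show ?thesis
    unfolding next_bit by (simp add: transitions_def c scan_snoc local_error_def)
qed

lemma waiting_positions_split:
  assumes "0 < N"
  shows "{p. p < L \<and> p mod 3 = 0 \<and> L \<le> p + 3 * N} =
    {p. p < L \<and> p mod 3 = 0 \<and> Suc L \<le> p + 3 * N}
    \<union> (if 3 * N \<le> L \<and> L mod 3 = 0 then {L - 3 * N} else {})" (is "?A = ?B \<union> ?C")
proof (intro set_eqI)
  fix p
  have "p mod 3 = L mod 3" if "p + 3 * N = L"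
    using that by (metis mod_mult_self2)
  with assms show "p \<in> ?A \<longleftrightarrow> p \<in> ?B \<union> ?C"
    by (cases "p + 3 * N = L") auto
qed

lemma transitions_waiting:
  assumes "0 < N"
  shows "(\<Union>s\<in>waiting N w. transitions N s x) =
    (\<lambda>p. Wait (p + 3 * N - Suc (length w)) (next_bit N ((!) w) p)) `
      {p. p < length w \<and> p mod 3 = 0 \<and> Suc (length w) \<le> p + 3 * N}
    \<union> (if 3 * N \<le> length w \<and> length w mod 3 = 0 \<and> (x = b) \<noteq> next_bit N ((!) w) (length w - 3 * N)
       then {Accept} else {})"
  unfolding waiting_def waiting_positions_split[OF assms] SUP_image
  by (auto simp: transitions_def)

lemma waiting_snoc:
  assumes "0 < N"
  shows "waiting N (w @ [x]) =
    (if length w mod 3 = 0 then {Wait (3 * N - 1) (next_bit N ((!) (w @ [x])) (length w))} else {})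
    \<union> (\<lambda>p. Wait (p + 3 * N - Suc (length w)) (next_bit N ((!) w) p)) `
        {p. p < length w \<and> p mod 3 = 0 \<and> Suc (length w) \<le> p + 3 * N}"
proof -
  have "{p. p < Suc (length w) \<and> p mod 3 = 0 \<and> Suc (length w) \<le> p + 3 * N} =
      (if length w mod 3 = 0 then {length w} else {})
      \<union> {p. p < length w \<and> p mod 3 = 0 \<and> Suc (length w) \<le> p + 3 * N}"
    using assms by (auto simp: less_Suc_eq)
  moreover have "next_bit N ((!) (w @ [x])) p = next_bit N ((!) w) p" if "p < length w" for p
    using that by (rule next_bit_snoc)
  ultimately show ?thesis
    unfolding waiting_def by (auto simp: image_Un)
qed

lemma steps_transitions_initial:
  assumes "0 < N"
  shows "steps (transitions N) (Scan 0 True True 0) w =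
    {scan N w} \<union> waiting N w \<union> (if has_error N w then {Accept} else {})"
proof (induction w rule: rev_induct)
  case Nil
  show ?case
    by (simp add: scan_def waiting_def has_error_def)
next
  case (snoc x w)
  have "steps (transitions N) (Scan 0 True True 0) (w @ [x]) =
      transitions N (scan N w) x \<union> (\<Union>s\<in>waiting N w. transitions N s x)
      \<union> (if has_error N w then {Accept} else {})"
    by (auto simp: steps_snoc snoc.IH transitions_def)
  then show ?case
    unfolding transitions_scan[OF assms] transitions_waiting[OF assms] waiting_snoc[OF assms]
      has_error_snoc bad_letter_def
    by auto
qed

lemma mem_lang_counter_nfa:
  assumes "0 < N"
  shows "w \<in> lang (counter_nfa N) \<longleftrightarrow>
    w \<noteq> counter_prefix N (length w) \<or> length w div (3 * N * 2 ^ N) \<noteq> 1"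
proof -
  have "waiting N w \<inter> accepting_states N = {}" "Accept \<in> accepting_states N"
    by (auto simp: waiting_def accepting_states_def)
  then have "w \<in> lang (counter_nfa N) \<longleftrightarrow> has_error N w \<or> scan N w \<in> accepting_states N"
    by (auto simp: counter_nfa_def lang_nfa_of steps_transitions_initial[OF assms])
  moreover have "scan N w \<in> accepting_states N \<longleftrightarrow> length w div (3 * N * 2 ^ N) \<noteq> 1"
    if w: "w = counter_prefix N (length w)"
  proof -
    obtain r g z where "scan N w = Scan r g z (min 2 (length w div (3 * N * 2 ^ N)))"
      using scan_counter_prefix_count[OF assms, of "length w"] w by metis
    moreover obtain c where "scan N w =
        Scan (length w mod (3 * N)) (carry N ((!) w) (length w)) (length w < 3 * N) c"
      using scan_eq_Scan[OF assms] by blast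
    ultimately show ?thesis
      using assms by (auto simp: accepting_states_def)
  qed
  ultimately show ?thesis
    using no_error_iff_counter_prefix[OF assms, of w] by blast
qed

lemma finite_compl_lang_counter_nfa:
  assumes "0 < N"
  shows "finite (- lang (counter_nfa N))"
proof (rule finite_subset)
  show "- lang (counter_nfa N) \<subseteq> counter_prefix N ` {..<2 * (3 * N * 2 ^ N)}"
  proof
    fix w assume "w \<in> - lang (counter_nfa N)"
    then have "w = counter_prefix N (length w)" "length w div (3 * N * 2 ^ N) = 1"
      using mem_lang_counter_nfa[OF assms, of w] by auto
    moreover have "0 < 3 * N * 2 ^ N"
      using assms by simp
    then have "length w < 2 * (3 * N * 2 ^ N)"
      using div_less_iff_less_mult[of "3 * N * 2 ^ N" "length w" 2]
        \<open>length w div (3 * N * 2 ^ N) = 1\<close> by simp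
    ultimately show "w \<in> counter_prefix N ` {..<2 * (3 * N * 2 ^ N)}"
      by (intro rev_image_eqI[of "length w"]) auto
  qed
qed simp

section \<open>Separation from poNFAs\<close>

lemma poNFA_counter_language_size:
  assumes "0 < N" "is_poNFA A" "lang A = lang (counter_nfa N)"
  shows "N * 2 ^ N \<le> size_nfa A"
proof (rule ccontr)
  let ?P = "3 * N * 2 ^ N"
  let ?u = "counter_prefix N (?P - 1)"
  assume "\<not> N * 2 ^ N \<le> size_nfa A"
  then have "3 * size_nfa A \<le> length ?u"
    by simp
  moreover have "?u \<in> lang A"
    using assms by (simp add: mem_lang_counter_nfa)
  ultimately obtain k l where kl: "k + 3 \<le> l" "l \<le> length ?u"
    and pump: "\<And>z. set z \<subseteq> set (drop k (take l ?u)) \<Longrightarrow> take k ?u @ z @ drop l ?u \<in> lang A"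
    using poNFA_pumping[OF assms(2)] by (metis zero_less_numeral)
  have "take k ?u @ map (counter_letter N) [k..<l + ?P] @ drop l ?u \<in> lang A"
    using kl by (intro pump) (simp add: set_counter_prefix_window)
  then have "counter_prefix N (?P - 1 + ?P) \<in> lang A"
    using kl assms(1) by (simp add: counter_prefix_pump)
  moreover have "(?P - 1 + ?P) div ?P = 1"
    using assms(1) by (intro div_nat_eqI) auto
  ultimately show False
    using assms by (simp add: mem_lang_counter_nfa)
qed

lemma size_counter_nfa_le_square:
  assumes "0 < n"
  shows "real (size_nfa (counter_nfa n)) \<le> 43 * (real n)^2"
proof -
  have "size_nfa (counter_nfa n) \<le> 43 * (n * n)"
    using size_counter_nfa[of n] assms le_square[of n] by linarith
  then show ?thesis
    by (simp add: power2_eq_square flip: of_nat_mult of_nat_le_iff)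
qed

theorem theorem9:
  shows "\<exists>c::real. \<forall>n::nat. n \<ge> 1 \<longrightarrow>
    (\<exists>L :: ab list set. DD0 L \<and>
       (\<exists>A. wf_nfa A \<and> lang A = L \<and> real (size_nfa A) \<le> c * (real n)^2) \<and>
       (\<forall>P. is_poNFA P \<and> lang P = L \<longrightarrow> size_nfa P > 2^(n - 1)))"
proof (intro exI[of _ 43] allI impI)
  fix n :: nat
  assume "n \<ge> 1"
  then have n: "0 < n" by simp
  have "2 ^ (n - 1) < size_nfa P" if "is_poNFA P" "lang P = lang (counter_nfa n)" for P
  proof -
    have "2 ^ (n - 1) < n * 2 ^ n"
      using n by (cases n) simp_all
    also have "\<dots> \<le> size_nfa P"
      using poNFA_counter_language_size[OF n that] .
    finally show ?thesis .
  qed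
  then show "\<exists>L. DD0 L \<and>
      (\<exists>A. wf_nfa A \<and> lang A = L \<and> real (size_nfa A) \<le> 43 * (real n)^2) \<and>
      (\<forall>P. is_poNFA P \<and> lang P = L \<longrightarrow> size_nfa P > 2^(n - 1))"
    using wf_counter_nfa[OF n] size_counter_nfa_le_square[OF n] finite_compl_lang_counter_nfa[OF n]
    by (intro exI[of _ "lang (counter_nfa n)"]) (auto simp: DD0_def)
qed

end
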